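(* Let $\beta\in[0,1]$, $n\in\mathbb{N}$, and let $\underline{\Delta}:\{k\in\mathbb{N}_0^{\{0,1\}^2}: k_{++}=n\}\to[-1,1]$ be a function. A. The following three assertions are equivalent: (i) $\underline{\Delta}$ is a lower $\beta$-confidence bound for the parameter $q\mapsto q_{01}-q_{10}$ in the multinomial model $\mathcal{M}:=(\mathrm{M}_{n,q}: q\in\mathrm{prob}(\{0,1\}^2))$. (ii) $\underline{\Delta}$ is a lower $\beta$-confidence bound for the parameter $(\pi,\chi)\mapsto \pi_1(\chi^{(2)}_{1|1}-\chi^{(1)}_{1|1})-(1-\pi_1)(\chi^{(2)}_{0|0}-\chi^{(1)}_{0|0})$ in the full latent class model $\mathcal{P}_2$. (iii) $\underline{\Delta}$ is a lower $\beta$-confidence bound for the parameter $(\pi,\chi)\mapsto \pi_1(\chi^{(2)}_{1|1}-\chi^{(1)}_{1|1})$ in the restricted latent class model $\mathcal{P}_{2,\le}$. B. Let $\underline{\Delta}$ satisfy (i)–(iii) and let $\tilde{\Delta}:\{k\in\mathbb{N}_0^{\{0,1\}^2}: k_{++}=n\}\to[-1,1]$ be another function satisfying (i)–(iii). If $\tilde{\Delta}$ is worse than $\underline{\Delta}$ as a lower $\beta$-confidence bound for the estimation problem ($\mathcal{P}_{2,\le}$, parameter in (iii)), then $\tilde{\Delta}$ is worse than $\underline{\Delta}$ also for the estimation problem ($\mathcal{P}_2$, parameter in (ii)), and equivalently for ($\mathcal{M}$, parameter in (i)). C. If $\underline{\Delta}$ is an admissible $\beta$-confidence bound for one of the estimation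 problems ($\mathcal{M}$, parameter in (i)) and ($\mathcal{P}_2$, parameter in (ii)), then it is admissible for the other one as well, and also for ($\mathcal{P}_{2,\le}$, parameter in (iii)).
   Context: For a finite set $\mathcal{X}$, $\mathrm{prob}(\mathcal{X})$ denotes the set of probability densities $p:\mathcal{X}\to[0,1]$ with $\sum_x p_x=1$; for finite sets $\mathcal{X},\mathcal{Y}$, $\mathrm{markov}(\mathcal{X},\mathcal{Y})$ denotes the set of maps $(x,y)\mapsto p_{y|x}$ with $p_{\cdot|x}\in\mathrm{prob}(\mathcal{Y})$ for every $x$. $\mathrm{M}_{n,p}$ is the multinomial distribution with sample size $n$ and probability vector $p$, i.e. $\mathrm{M}_{n,p}(\{k\})=n!\prod_x p_x^{k_x}/k_x!$ for $k\in\mathbb{N}_0^{\mathcal{X}}$ with $\sum_x k_x=n$. A subscript $+$ denotes summation over the replaced index, e.g. $k_{++}=\sum_{i,j}k_{ij}$, $q_{1+}=q_{10}+q_{11}$. Let $\Theta_2:=\mathrm{prob}(\{0,1\})\times\mathrm{markov}(\{0,1\},\{0,1\}^2)$, with elements $\theta=(\pi,\chi)$. Define $\mu(\theta)\in\mathrm{prob}(\{0,1\}^2)$ by $\mu(\theta)_j=\sum_{i=0}^1\pi_i\chi_{j|i}$ for $j\in\{0,1\}^2$, and $P_\theta:=\mathrm{M}_{n,\mu(\theta)}$. For $i,\iota\in\{0,1\}$ put $\chi^{(1)}_{\iota|i}:=\chi_{\iota 0|i}+\chi_{\iota 1|i}$ and $\chi^{(2)}_{\iota|i}:=\chi_{0\iota|i}+\chi_{1\iota|i}$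 (characteristics of the first and second test; $\pi_1$ is the prevalence, $\chi^{(m)}_{1|1}$ the sensitivity and $\chi^{(m)}_{0|0}$ the specificity of test $m$). The full latent class model is $\mathcal{P}_2:=(P_\theta:\theta\in\Theta_2)$; the restricted latent class model is $\mathcal{P}_{2,\le}:=(P_\theta:\theta\in\Theta_{2,\le})$ with $\Theta_{2,\le}:=\{(\pi,\chi)\in\Theta_2:\chi^{(1)}_{0|0}\le\chi^{(2)}_{0|0}\}$. For a statistical model $(P_\theta:\theta\in\Theta)$ on a sample space and a parameter $\kappa:\Theta\to\overline{\mathbb{R}}$ (not necessarily identifiable), a measurable $\underline{\kappa}$ with values in $\overline{\mathbb{R}}$ is a lower $\beta$-confidence bound if $P_\theta(\underline{\kappa}\le\kappa(\theta))\ge\beta$ for all $\theta$. For two such bounds, $\tilde{\kappa}$ is called worse than $\underline{\kappa}$ if $P_\theta(\tilde{\kappa}\ge t)\le P_\theta(\underline{\kappa}\ge t)$ for all $\theta\in\Theta$ and all $t<\kappa(\theta)$; strictly worse if moreover strict inequality holds for at least one $\theta$ and $t$. $\underline{\kappa}$ is admissible (as a lower $\beta$-confidence bound for the problem) if no other lower $\beta$-confidence bound for that problem is strictly better (i.e. no bound relative to which $\underline{\kappa}$ is strictly worse). *)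

theory Defs
  imports "HOL-Analysis.Analysis" "HOL-Library.Extended_Real"
begin

text \<open>The set {0,1} is encoded as bool (False = 0, True = 1); {0,1}^2 as bool \<times> bool.
  An observation is a count vector k :: bool \<times> bool \<Rightarrow> nat.\<close>

type_synonym cell = "bool \<times> bool"
type_synonym counts = "cell \<Rightarrow> nat"

definition prob_dens :: "('a::finite \<Rightarrow> real) \<Rightarrow> bool" where
  "prob_dens p \<longleftrightarrow> (\<forall>x. 0 \<le> p x \<and> p x \<le> 1) \<and> (\<Sum>x\<in>UNIV. p x) = 1"

definition sample_space :: "nat \<Rightarrow> counts set" where
  "sample_space n = {k. (\<Sum>x\<in>UNIV. k x) = n}"

definition multinom :: "nat \<Rightarrow> (cell \<Rightarrow> real) \<Rightarrow> counts \<Rightarrow> real" where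
  "multinom n q k = fact n * (\<Prod>x\<in>UNIV. q x ^ k x / fact (k x))"

definition Mprob :: "nat \<Rightarrow> (cell \<Rightarrow> real) \<Rightarrow> (counts \<Rightarrow> bool) \<Rightarrow> real" where
  "Mprob n q A = (\<Sum>k\<in>{k\<in>sample_space n. A k}. multinom n q k)"

text \<open>Generic model (P_theta : theta \<in> Theta) with P_theta = M_{n, qm theta} and parameter kappa.
  Bounds take values in the extended reals; every function on the finite (discrete)
  sample space is measurable.\<close>

definition lower_conf_bound ::
  "nat \<Rightarrow> real \<Rightarrow> 'p set \<Rightarrow> ('p \<Rightarrow> cell \<Rightarrow> real) \<Rightarrow> ('p \<Rightarrow> real) \<Rightarrow> (counts \<Rightarrow> ereal) \<Rightarrow> bool" where
  "lower_conf_bound n \<beta> \<Theta> qm \<kappa> D \<longleftrightarrow>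
     (\<forall>\<theta>\<in>\<Theta>. Mprob n (qm \<theta>) (\<lambda>k. D k \<le> ereal (\<kappa> \<theta>)) \<ge> \<beta>)"

definition worse ::
  "nat \<Rightarrow> 'p set \<Rightarrow> ('p \<Rightarrow> cell \<Rightarrow> real) \<Rightarrow> ('p \<Rightarrow> real) \<Rightarrow> (counts \<Rightarrow> ereal) \<Rightarrow> (counts \<Rightarrow> ereal) \<Rightarrow> bool" where
  "worse n \<Theta> qm \<kappa> Dt D \<longleftrightarrow>
     (\<forall>\<theta>\<in>\<Theta>. \<forall>t::ereal. t < ereal (\<kappa> \<theta>) \<longrightarrow>
        Mprob n (qm \<theta>) (\<lambda>k. Dt k \<ge> t) \<le> Mprob n (qm \<theta>) (\<lambda>k. D k \<ge> t))"

definition strictly_worse ::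
  "nat \<Rightarrow> 'p set \<Rightarrow> ('p \<Rightarrow> cell \<Rightarrow> real) \<Rightarrow> ('p \<Rightarrow> real) \<Rightarrow> (counts \<Rightarrow> ereal) \<Rightarrow> (counts \<Rightarrow> ereal) \<Rightarrow> bool" where
  "strictly_worse n \<Theta> qm \<kappa> Dt D \<longleftrightarrow> worse n \<Theta> qm \<kappa> Dt D \<and>
     (\<exists>\<theta>\<in>\<Theta>. \<exists>t::ereal. t < ereal (\<kappa> \<theta>) \<and>
        Mprob n (qm \<theta>) (\<lambda>k. Dt k \<ge> t) < Mprob n (qm \<theta>) (\<lambda>k. D k \<ge> t))"

definition admissible ::
  "nat \<Rightarrow> real \<Rightarrow> 'p set \<Rightarrow> ('p \<Rightarrow> cell \<Rightarrow> real) \<Rightarrow> ('p \<Rightarrow> real) \<Rightarrow> (counts \<Rightarrow> ereal) \<Rightarrow> bool" where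
  "admissible n \<beta> \<Theta> qm \<kappa> D \<longleftrightarrow> lower_conf_bound n \<beta> \<Theta> qm \<kappa> D \<and>
     \<not> (\<exists>D'. lower_conf_bound n \<beta> \<Theta> qm \<kappa> D' \<and> strictly_worse n \<Theta> qm \<kappa> D D')"

definition ThetaM :: "(cell \<Rightarrow> real) set" where
  "ThetaM = {q. prob_dens q}"

definition kappaM :: "(cell \<Rightarrow> real) \<Rightarrow> real" where
  "kappaM q = q (False, True) - q (True, False)"

text \<open>Latent class model: theta = (pi, chi), chi i j = chi_{j|i}.\<close>
type_synonym lcparam = "(bool \<Rightarrow> real) \<times> (bool \<Rightarrow> cell \<Rightarrow> real)"

definition Theta2 :: "lcparam set" where
  "Theta2 = {(pr, ch). prob_dens pr \<and> (\<forall>i. prob_dens (ch i))}"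

definition mu :: "lcparam \<Rightarrow> cell \<Rightarrow> real" where
  "mu \<theta> j = (\<Sum>i\<in>UNIV. fst \<theta> i * snd \<theta> i j)"

text \<open>chi1 chi iota i = chi^{(1)}_{iota|i}, chi2 chi iota i = chi^{(2)}_{iota|i}.\<close>
definition chi1 :: "(bool \<Rightarrow> cell \<Rightarrow> real) \<Rightarrow> bool \<Rightarrow> bool \<Rightarrow> real" where
  "chi1 ch \<iota> i = ch i (\<iota>, False) + ch i (\<iota>, True)"

definition chi2 :: "(bool \<Rightarrow> cell \<Rightarrow> real) \<Rightarrow> bool \<Rightarrow> bool \<Rightarrow> real" where
  "chi2 ch \<iota> i = ch i (False, \<iota>) + ch i (True, \<iota>)"

definition Theta2le :: "lcparam set" where
  "Theta2le = {(pr, ch) \<in> Theta2. chi1 ch False False \<le> chi2 ch False False}"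

definition kappa2 :: "lcparam \<Rightarrow> real" where
  "kappa2 \<theta> = (case \<theta> of (pr, ch) \<Rightarrow>
     pr True * (chi2 ch True True - chi1 ch True True)
     - (1 - pr True) * (chi2 ch False False - chi1 ch False False))"

definition kappa2le :: "lcparam \<Rightarrow> real" where
  "kappa2le \<theta> = (case \<theta> of (pr, ch) \<Rightarrow> pr True * (chi2 ch True True - chi1 ch True True))"

end

theory Submission
  imports Defs "HOL-Computational_Algebra.Polynomial"
begin

text \<open>The map \<open>\<theta> \<mapsto> \<mu>(\<theta>)\<close> sends \<open>\<Theta>\<^sub>2\<close> onto \<open>prob({0,1}\<^sup>2)\<close> and carries the parameter (ii) to
  \<open>q\<^sub>0\<^sub>1 - q\<^sub>1\<^sub>0\<close>; conversely every \<open>q\<close> is realised in \<open>\<Theta>\<^sub>2\<^sub>,\<^sub>\<le>\<close> with prevalence 1, where both latent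
  parameters equal \<open>q\<^sub>0\<^sub>1 - q\<^sub>1\<^sub>0\<close>. Confidence bounds and their comparison depend on a model only
  through the pairs (distribution, parameter value) it realises, and on \<open>\<Theta>\<^sub>2\<^sub>,\<^sub>\<le>\<close> the parameter
  (iii) dominates (ii). This gives everything except the transfer of a strict improvement
  from \<open>\<Theta>\<^sub>2\<^sub>,\<^sub>\<le>\<close> to the multinomial model, where it might occur only at a level \<open>t\<close> above
  \<open>q\<^sub>0\<^sub>1 - q\<^sub>1\<^sub>0\<close>. Such an improvement is moved along the segment from \<open>q\<close> to the point mass at
  \<open>01\<close>: multinomial probabilities are polynomials in the position on the segment, and near
  the point mass \<open>q\<^sub>0\<^sub>1 - q\<^sub>1\<^sub>0\<close> exceeds every \<open>t < 1\<close>.\<close>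

definition model_graph :: "'p set \<Rightarrow> ('p \<Rightarrow> cell \<Rightarrow> real) \<Rightarrow> ('p \<Rightarrow> real) \<Rightarrow> ((cell \<Rightarrow> real) \<times> real) set"
  where "model_graph \<Theta> qm \<kappa> = (\<lambda>\<theta>. (qm \<theta>, \<kappa> \<theta>)) ` \<Theta>"

lemma lower_conf_bound_graph:
  "lower_conf_bound n \<beta> \<Theta> qm \<kappa> D \<longleftrightarrow>
     (\<forall>(q, k)\<in>model_graph \<Theta> qm \<kappa>. \<beta> \<le> Mprob n q (\<lambda>x. D x \<le> ereal k))"
  unfolding lower_conf_bound_def model_graph_def by auto

lemma worse_graph:
  "worse n \<Theta> qm \<kappa> Dt D \<longleftrightarrow>
     (\<forall>(q, k)\<in>model_graph \<Theta> qm \<kappa>. \<forall>t. t < ereal k \<longrightarrow>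
        Mprob n q (\<lambda>x. Dt x \<ge> t) \<le> Mprob n q (\<lambda>x. D x \<ge> t))"
  unfolding worse_def model_graph_def by auto

lemma strictly_worse_graph:
  "strictly_worse n \<Theta> qm \<kappa> Dt D \<longleftrightarrow> worse n \<Theta> qm \<kappa> Dt D \<and>
     (\<exists>(q, k)\<in>model_graph \<Theta> qm \<kappa>. \<exists>t. t < ereal k \<and>
        Mprob n q (\<lambda>x. Dt x \<ge> t) < Mprob n q (\<lambda>x. D x \<ge> t))"
  unfolding strictly_worse_def model_graph_def by auto

lemma lower_conf_bound_antimono_graph:
  assumes "model_graph \<Theta> qm \<kappa> \<subseteq> model_graph \<Theta>' qm' \<kappa>'"
    and "lower_conf_bound n \<beta> \<Theta>' qm' \<kappa>' D"
  shows "lower_conf_bound n \<beta> \<Theta> qm \<kappa> D"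
  using assms unfolding lower_conf_bound_graph by blast

lemma worse_antimono_graph:
  assumes "model_graph \<Theta> qm \<kappa> \<subseteq> model_graph \<Theta>' qm' \<kappa>'"
    and "worse n \<Theta>' qm' \<kappa>' Dt D"
  shows "worse n \<Theta> qm \<kappa> Dt D"
  using assms unfolding worse_graph by blast

lemma admissible_cong_graph:
  assumes "model_graph \<Theta> qm \<kappa> = model_graph \<Theta>' qm' \<kappa>'"
  shows "admissible n \<beta> \<Theta> qm \<kappa> D \<longleftrightarrow> admissible n \<beta> \<Theta>' qm' \<kappa>' D"
  unfolding admissible_def strictly_worse_graph worse_graph lower_conf_bound_graph assms ..

lemma finite_sample_space: "finite (sample_space n)"
proof (rule finite_subset)
  show "sample_space n \<subseteq> Pi\<^sub>E UNIV (\<lambda>_. {..n})"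
  proof
    fix k assume "k \<in> sample_space n"
    moreover have "k x \<le> sum k UNIV" for x by (rule member_le_sum) auto
    ultimately show "k \<in> Pi\<^sub>E UNIV (\<lambda>_. {..n})"
      unfolding sample_space_def PiE_UNIV_domain by auto
  qed
  show "finite (Pi\<^sub>E (UNIV :: cell set) (\<lambda>_. {..n}))" by (intro finite_PiE) auto
qed

lemma multinom_nonneg: "(\<And>x. 0 \<le> q x) \<Longrightarrow> 0 \<le> multinom n q k"
  unfolding multinom_def by (intro mult_nonneg_nonneg prod_nonneg divide_nonneg_pos) auto

lemma Mprob_mono:
  assumes "\<And>x. 0 \<le> q x" "\<And>k. A k \<Longrightarrow> B k"
  shows "Mprob n q A \<le> Mprob n q B"
  unfolding Mprob_def
  by (rule sum_mono2) (use finite_sample_space assms multinom_nonneg in auto)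

lemma lower_conf_bound_mono:
  assumes "lower_conf_bound n \<beta> \<Theta> qm \<kappa> D" "\<Theta>' \<subseteq> \<Theta>"
    and "\<And>\<theta>. \<theta> \<in> \<Theta>' \<Longrightarrow> \<kappa> \<theta> \<le> \<kappa>' \<theta>"
    and "\<And>\<theta> x. \<theta> \<in> \<Theta>' \<Longrightarrow> 0 \<le> qm \<theta> x"
  shows "lower_conf_bound n \<beta> \<Theta>' qm \<kappa>' D"
  unfolding lower_conf_bound_def
proof
  fix \<theta> assume \<theta>: "\<theta> \<in> \<Theta>'"
  have "\<beta> \<le> Mprob n (qm \<theta>) (\<lambda>k. D k \<le> ereal (\<kappa> \<theta>))"
    using assms(1,2) \<theta> unfolding lower_conf_bound_def by blast
  also have "\<dots> \<le> Mprob n (qm \<theta>) (\<lambda>k. D k \<le> ereal (\<kappa>' \<theta>))"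
    using assms(3,4)[OF \<theta>] by (intro Mprob_mono) (auto intro: order_trans)
  finally show "\<beta> \<le> Mprob n (qm \<theta>) (\<lambda>k. D k \<le> ereal (\<kappa>' \<theta>))" .
qed

lemma Mprob_segment_poly:
  obtains p :: "real poly"
  where "\<And>s. Mprob n (\<lambda>x. (1 - s) * q0 x + s * q1 x) A = poly p s"
proof
  fix s
  show "Mprob n (\<lambda>x. (1 - s) * q0 x + s * q1 x) A =
    poly (\<Sum>k\<in>{k\<in>sample_space n. A k}. smult (fact n)
      (\<Prod>x\<in>UNIV. smult (1 / fact (k x)) ([:q0 x, q1 x - q0 x:] ^ k x))) s"
    unfolding Mprob_def multinom_def by (simp add: poly_sum poly_prod algebra_simps)
qed

lemma Mprob_segment_eq:
  assumes "infinite S"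
    and "\<And>s. s \<in> S \<Longrightarrow>
      Mprob n (\<lambda>x. (1 - s) * q0 x + s * q1 x) A = Mprob n (\<lambda>x. (1 - s) * q0 x + s * q1 x) B"
  shows "Mprob n (\<lambda>x. (1 - s) * q0 x + s * q1 x) A = Mprob n (\<lambda>x. (1 - s) * q0 x + s * q1 x) B"
proof -
  obtain pA pB where pA: "\<And>s. Mprob n (\<lambda>x. (1 - s) * q0 x + s * q1 x) A = poly pA s"
    and pB: "\<And>s. Mprob n (\<lambda>x. (1 - s) * q0 x + s * q1 x) B = poly pB s"
    by (metis Mprob_segment_poly)
  have "S \<subseteq> {s. poly (pA - pB) s = 0}" using assms(2) by (auto simp: pA pB)
  then have "pA - pB = 0" using assms(1) poly_roots_finite finite_subset by blast
  then show ?thesis by (simp add: pA pB)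
qed

lemma prob_dens_convex:
  assumes "prob_dens p" "prob_dens q" "0 \<le> s" "s \<le> 1"
  shows "prob_dens (\<lambda>x. (1 - s) * p x + s * q x)"
proof -
  have p: "\<And>x. 0 \<le> p x" "\<And>x. p x \<le> 1" "sum p UNIV = 1"
    and q: "\<And>x. 0 \<le> q x" "\<And>x. q x \<le> 1" "sum q UNIV = 1"
    using assms(1,2) by (auto simp: prob_dens_def)
  have "(1 - s) * p x + s * q x \<le> (1 - s) * 1 + s * 1" for x
    using p q assms(3,4) by (intro add_mono mult_left_mono) auto
  moreover have "(\<Sum>x\<in>UNIV. (1 - s) * p x + s * q x) = 1"
    by (simp add: sum.distrib sum_distrib_left[symmetric] p q)
  ultimately show ?thesis
    using p q assms(3,4) by (simp add: prob_dens_def)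
qed

lemma ThetaM_nonneg: "q \<in> ThetaM \<Longrightarrow> 0 \<le> q x"
  by (cases x) (simp add: ThetaM_def prob_dens_def)

lemma kappaM_ge_minus_one: "q \<in> ThetaM \<Longrightarrow> -1 \<le> kappaM q"
  unfolding ThetaM_def prob_dens_def kappaM_def
  by (smt (verit) mem_Collect_eq)

lemma Mprob_lt_above_level:
  assumes q0: "q0 \<in> ThetaM" and "t < 1" and lt: "Mprob n q0 A < Mprob n q0 B"
    and le: "\<And>q. q \<in> ThetaM \<Longrightarrow> t < ereal (kappaM q) \<Longrightarrow> Mprob n q A \<le> Mprob n q B"
  obtains q where "q \<in> ThetaM" "t < ereal (kappaM q)" "Mprob n q A < Mprob n q B"
proof -
  define e :: "cell \<Rightarrow> real" where "e = (\<lambda>j. if j = (False, True) then 1 else 0)"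
  define seg where "seg s = (\<lambda>x. (1 - s) * q0 x + s * e x)" for s :: real
  obtain r where r: "t \<le> ereal r" "r < 1"
    using \<open>t < 1\<close> by (cases t) (auto intro: that[of 0])
  define s1 where "s1 = max 0 ((r + 1) / 2)"
  have seg_in: "seg s \<in> ThetaM" if "s \<in> {s1<..<1}" for s
  proof -
    have "prob_dens e" by (simp add: prob_dens_def e_def)
    then show ?thesis
      using q0 that unfolding ThetaM_def seg_def s1_def by (auto intro: prob_dens_convex)
  qed
  have seg_above: "t < ereal (kappaM (seg s))" if "s \<in> {s1<..<1}" for s
  proof -
    have "kappaM (seg s) = (1 - s) * kappaM q0 + s"
      by (simp add: seg_def kappaM_def e_def algebra_simps)
    also have "\<dots> \<ge> (1 - s) * (-1) + s"
      using kappaM_ge_minus_one[OF q0] that by (intro add_right_mono mult_left_mono) auto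
    finally have "r < kappaM (seg s)"
      using that by (simp add: s1_def)
    then show ?thesis using r(1) by (simp add: order_le_less_trans)
  qed
  note witness = that
  show thesis
  proof (rule ccontr)
    assume "\<not> thesis"
    then have "Mprob n (seg s) A = Mprob n (seg s) B" if "s \<in> {s1<..<1}" for s
      using witness[OF seg_in seg_above] le[OF seg_in seg_above] that
      by (meson order.not_eq_order_implies_strict)
    moreover have "infinite {s1<..<1}" using r by (simp add: s1_def)
    ultimately have "Mprob n (seg 0) A = Mprob n (seg 0) B"
      unfolding seg_def by (rule Mprob_segment_eq[rotated])
    then show False using lt by (simp add: seg_def)
  qed
qed

lemma Theta2_memD:
  assumes "(pr, ch) \<in> Theta2"
  shows "pr False = 1 - pr True" "0 \<le> pr True" "pr True \<le> 1"
    "\<And>i j. 0 \<le> ch i j" "\<And>i j. ch i j \<le> 1" "\<And>i. (\<Sum>j\<in>UNIV. ch i j) = 1"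
  using assms by (auto simp: Theta2_def prob_dens_def UNIV_bool)

lemma mu_in_ThetaM:
  assumes "\<theta> \<in> Theta2"
  shows "mu \<theta> \<in> ThetaM"
proof -
  obtain pr ch where \<theta>: "\<theta> = (pr, ch)" by (cases \<theta>)
  note h = Theta2_memD[OF assms[unfolded \<theta>]]
  have "mu \<theta> = (\<lambda>j. (1 - pr True) * ch False j + pr True * ch True j)"
    by (simp add: mu_def \<theta> UNIV_bool h(1) fun_eq_iff)
  moreover have "prob_dens (\<lambda>j. (1 - pr True) * ch False j + pr True * ch True j)"
    using h by (intro prob_dens_convex) (auto simp: prob_dens_def)
  ultimately show ?thesis by (simp add: ThetaM_def)
qed

lemma kappa2_eq_kappaM_mu:
  assumes "\<theta> \<in> Theta2"
  shows "kappa2 \<theta> = kappaM (mu \<theta>)"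
proof -
  obtain pr ch where \<theta>: "\<theta> = (pr, ch)" by (cases \<theta>)
  show ?thesis
    by (simp add: \<theta> Theta2_memD(1)[OF assms[unfolded \<theta>]] kappa2_def kappaM_def mu_def
        UNIV_bool chi1_def chi2_def algebra_simps)
qed

text \<open>The healthy class is never observed; giving both tests specificity 1 places the
  parameter in \<open>\<Theta>\<^sub>2\<^sub>,\<^sub>\<le>\<close>.\<close>
definition latent_of :: "(cell \<Rightarrow> real) \<Rightarrow> lcparam" where
  "latent_of q = ((\<lambda>i. if i then 1 else 0),
     (\<lambda>i. if i then q else (\<lambda>j. if j = (False, False) then 1 else 0)))"

lemma
  assumes "q \<in> ThetaM"
  shows latent_of_in_Theta2le: "latent_of q \<in> Theta2le"
    and mu_latent_of: "mu (latent_of q) = q"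
    and kappa2_latent_of: "kappa2 (latent_of q) = kappaM q"
    and kappa2le_latent_of: "kappa2le (latent_of q) = kappaM q"
  using assms
  by (auto simp: latent_of_def Theta2le_def Theta2_def kappa2_def kappa2le_def ThetaM_def
      kappaM_def prob_dens_def mu_def UNIV_bool chi1_def chi2_def)

lemma Theta2le_subset_Theta2: "Theta2le \<subseteq> Theta2"
  unfolding Theta2le_def by auto

lemma kappa2_le_kappa2le: "\<theta> \<in> Theta2le \<Longrightarrow> kappa2 \<theta> \<le> kappa2le \<theta>"
  by (cases \<theta>) (auto simp: Theta2le_def kappa2_def kappa2le_def dest!: Theta2_memD(3))

lemma kappa2le_le_one:
  assumes "\<theta> \<in> Theta2le"
  shows "kappa2le \<theta> \<le> 1"
proof -
  obtain pr ch where \<theta>: "\<theta> = (pr, ch)" by (cases \<theta>)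
  note h = Theta2_memD[OF subsetD[OF Theta2le_subset_Theta2 assms, unfolded \<theta>]]
  have "kappa2le \<theta> = pr True * (ch True (False, True) - ch True (True, False))"
    by (simp add: \<theta> kappa2le_def chi1_def chi2_def)
  also have "\<dots> \<le> pr True * 1"
    using h(2,4,5) by (intro mult_left_mono) (auto simp: diff_le_eq add_increasing2)
  finally show ?thesis using h(3) by simp
qed

lemma model_graph_Theta2: "model_graph Theta2 mu kappa2 = model_graph ThetaM id kappaM"
proof
  show "model_graph Theta2 mu kappa2 \<subseteq> model_graph ThetaM id kappaM"
    by (auto simp: model_graph_def mu_in_ThetaM kappa2_eq_kappaM_mu)
  show "model_graph ThetaM id kappaM \<subseteq> model_graph Theta2 mu kappa2"
    unfolding model_graph_def
    using latent_of_in_Theta2le Theta2le_subset_Theta2 mu_latent_of kappa2_latent_of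
    by (auto intro!: image_eqI)
qed

lemma model_graph_ThetaM_subset_Theta2le:
  "model_graph ThetaM id kappaM \<subseteq> model_graph Theta2le mu kappa2le"
  unfolding model_graph_def
  using latent_of_in_Theta2le mu_latent_of kappa2le_latent_of by (auto intro!: image_eqI)

lemma lower_conf_bound_ThetaM_iff_Theta2:
  "lower_conf_bound n \<beta> ThetaM id kappaM D \<longleftrightarrow> lower_conf_bound n \<beta> Theta2 mu kappa2 D"
  unfolding lower_conf_bound_graph model_graph_Theta2 ..

lemma lower_conf_bound_Theta2_iff_Theta2le:
  "lower_conf_bound n \<beta> Theta2 mu kappa2 D \<longleftrightarrow> lower_conf_bound n \<beta> Theta2le mu kappa2le D"
proof
  assume "lower_conf_bound n \<beta> Theta2 mu kappa2 D"
  then show "lower_conf_bound n \<beta> Theta2le mu kappa2le D"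
    using Theta2le_subset_Theta2 kappa2_le_kappa2le
  proof (rule lower_conf_bound_mono)
    show "0 \<le> mu \<theta> x" if "\<theta> \<in> Theta2le" for \<theta> x
      using that Theta2le_subset_Theta2 by (blast intro: ThetaM_nonneg mu_in_ThetaM)
  qed
next
  assume "lower_conf_bound n \<beta> Theta2le mu kappa2le D"
  then show "lower_conf_bound n \<beta> Theta2 mu kappa2 D"
    using model_graph_ThetaM_subset_Theta2le
    by (auto simp: lower_conf_bound_ThetaM_iff_Theta2[symmetric] intro: lower_conf_bound_antimono_graph)
qed

lemma worse_ThetaM_iff_Theta2:
  "worse n ThetaM id kappaM Dt D \<longleftrightarrow> worse n Theta2 mu kappa2 Dt D"
  unfolding worse_graph model_graph_Theta2 ..

lemma worse_Theta2le_imp_ThetaM: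
  "worse n Theta2le mu kappa2le Dt D \<Longrightarrow> worse n ThetaM id kappaM Dt D"
  using model_graph_ThetaM_subset_Theta2le by (rule worse_antimono_graph)

lemma strictly_worse_Theta2le_imp_ThetaM:
  assumes "strictly_worse n Theta2le mu kappa2le Dt D"
  shows "strictly_worse n ThetaM id kappaM Dt D"
proof -
  have worse: "worse n ThetaM id kappaM Dt D"
    using assms unfolding strictly_worse_def by (blast intro: worse_Theta2le_imp_ThetaM)
  from assms obtain \<theta> t where \<theta>: "\<theta> \<in> Theta2le" and t: "t < ereal (kappa2le \<theta>)"
    and lt: "Mprob n (mu \<theta>) (\<lambda>k. t \<le> Dt k) < Mprob n (mu \<theta>) (\<lambda>k. t \<le> D k)"
    unfolding strictly_worse_def by blast
  have "t < 1" using t kappa2le_le_one[OF \<theta>] by (simp add: order_less_le_trans)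
  with mu_in_ThetaM[OF subsetD[OF Theta2le_subset_Theta2 \<theta>]] obtain q
    where "q \<in> ThetaM" "t < ereal (kappaM q)"
      "Mprob n q (\<lambda>k. t \<le> Dt k) < Mprob n q (\<lambda>k. t \<le> D k)"
    using lt worse unfolding worse_def by (auto elim: Mprob_lt_above_level)
  with worse show ?thesis unfolding strictly_worse_def by auto
qed

lemma admissible_ThetaM_imp_Theta2le:
  assumes "admissible n \<beta> ThetaM id kappaM D"
  shows "admissible n \<beta> Theta2le mu kappa2le D"
  using assms strictly_worse_Theta2le_imp_ThetaM
  unfolding admissible_def lower_conf_bound_ThetaM_iff_Theta2 lower_conf_bound_Theta2_iff_Theta2le
  by blast

theorem theorem1:
  fixes \<beta> :: real and n :: nat and \<Delta> :: "counts \<Rightarrow> real"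
  assumes "0 \<le> \<beta>" "\<beta> \<le> 1" "1 \<le> n"
    and "\<forall>k\<in>sample_space n. -1 \<le> \<Delta> k \<and> \<Delta> k \<le> 1"
  shows
    "(lower_conf_bound n \<beta> ThetaM id kappaM (\<lambda>k. ereal (\<Delta> k))
        \<longleftrightarrow> lower_conf_bound n \<beta> Theta2 mu kappa2 (\<lambda>k. ereal (\<Delta> k)))
     \<and> (lower_conf_bound n \<beta> Theta2 mu kappa2 (\<lambda>k. ereal (\<Delta> k))
        \<longleftrightarrow> lower_conf_bound n \<beta> Theta2le mu kappa2le (\<lambda>k. ereal (\<Delta> k)))
     \<and> (\<forall>\<Delta>t :: counts \<Rightarrow> real.
          (\<forall>k\<in>sample_space n. -1 \<le> \<Delta>t k \<and> \<Delta>t k \<le> 1)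
          \<longrightarrow> lower_conf_bound n \<beta> ThetaM id kappaM (\<lambda>k. ereal (\<Delta> k))
          \<longrightarrow> lower_conf_bound n \<beta> Theta2 mu kappa2 (\<lambda>k. ereal (\<Delta> k))
          \<longrightarrow> lower_conf_bound n \<beta> Theta2le mu kappa2le (\<lambda>k. ereal (\<Delta> k))
          \<longrightarrow> lower_conf_bound n \<beta> ThetaM id kappaM (\<lambda>k. ereal (\<Delta>t k))
          \<longrightarrow> lower_conf_bound n \<beta> Theta2 mu kappa2 (\<lambda>k. ereal (\<Delta>t k))
          \<longrightarrow> lower_conf_bound n \<beta> Theta2le mu kappa2le (\<lambda>k. ereal (\<Delta>t k))
          \<longrightarrow> worse n Theta2le mu kappa2le (\<lambda>k. ereal (\<Delta>t k)) (\<lambda>k. ereal (\<Delta> k))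
          \<longrightarrow> worse n Theta2 mu kappa2 (\<lambda>k. ereal (\<Delta>t k)) (\<lambda>k. ereal (\<Delta> k))
            \<and> worse n ThetaM id kappaM (\<lambda>k. ereal (\<Delta>t k)) (\<lambda>k. ereal (\<Delta> k)))
     \<and> ((admissible n \<beta> ThetaM id kappaM (\<lambda>k. ereal (\<Delta> k))
          \<or> admissible n \<beta> Theta2 mu kappa2 (\<lambda>k. ereal (\<Delta> k)))
        \<longrightarrow> admissible n \<beta> ThetaM id kappaM (\<lambda>k. ereal (\<Delta> k))
          \<and> admissible n \<beta> Theta2 mu kappa2 (\<lambda>k. ereal (\<Delta> k))
          \<and> admissible n \<beta> Theta2le mu kappa2le (\<lambda>k. ereal (\<Delta> k)))"
  using lower_conf_bound_ThetaM_iff_Theta2 lower_conf_bound_Theta2_iff_Theta2le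
    worse_ThetaM_iff_Theta2 worse_Theta2le_imp_ThetaM
    admissible_cong_graph[OF model_graph_Theta2] admissible_ThetaM_imp_Theta2le
  by blast

end
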